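(* Let $G$ be a directed graph and let $T$ be an out-directed tree which is not (isomorphic to) a subgraph of $G$. Then there is a partition $\{U,X,Y\}$ of $V(G)$ (parts possibly empty) such that $U$ is the vertex set of a subgraph of $G$ isomorphic to a subtree of $T$, $|X|=|Y|$, and every vertex in $X$ has fewer than $|T|$ out-neighbours in $Y$.
   Context: An out-directed tree is an oriented tree (underlying graph a tree, no bidirected edges) having a vertex $r$, the root, such that every edge is directed away from $r$. A subtree is a connected subgraph of the tree. $|T|$ is the number of vertices of $T$. *)

theory Defs
  imports Main
begin

definition digraph :: "'a set \<Rightarrow> ('a \<times> 'a) set \<Rightarrow> bool" where
  "digraph V E \<longleftrightarrow> finite V \<and> E \<subseteq> V \<times> V \<and> (\<forall>v. (v, v) \<notin> E)"

definition adj :: "('a \<times> 'a) set \<Rightarrow> 'a \<Rightarrow> 'a \<Rightarrow> bool" where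
  "adj E u v \<longleftrightarrow> (u, v) \<in> E \<or> (v, u) \<in> E"

definition ug_connected :: "'a set \<Rightarrow> ('a \<times> 'a) set \<Rightarrow> bool" where
  "ug_connected V E \<longleftrightarrow>
     (\<forall>u\<in>V. \<forall>v\<in>V. ((u, v) \<in> ({(x, y). adj E x y} \<inter> (V \<times> V))\<^sup>*))"

definition ug_has_cycle :: "'a set \<Rightarrow> ('a \<times> 'a) set \<Rightarrow> bool" where
  "ug_has_cycle V E \<longleftrightarrow>
     (\<exists>cs. length cs \<ge> 3 \<and> distinct cs \<and> set cs \<subseteq> V \<and>
        (\<forall>i. Suc i < length cs \<longrightarrow> adj E (cs ! i) (cs ! Suc i)) \<and>
        adj E (last cs) (hd cs))"

definition oriented_tree :: "'b set \<Rightarrow> ('b \<times> 'b) set \<Rightarrow> bool" where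
  "oriented_tree V E \<longleftrightarrow> digraph V E \<and> V \<noteq> {} \<and> ug_connected V E \<and> \<not> ug_has_cycle V E
     \<and> (\<forall>u v. (u, v) \<in> E \<longrightarrow> (v, u) \<notin> E)"

text \<open>Out-directed tree with root r: every edge is directed away from r, i.e. every vertex
  is reached from r by a directed path.\<close>
definition out_tree :: "'b set \<Rightarrow> ('b \<times> 'b) set \<Rightarrow> 'b \<Rightarrow> bool" where
  "out_tree V E r \<longleftrightarrow> oriented_tree V E \<and> r \<in> V \<and> (\<forall>v\<in>V. (r, v) \<in> E\<^sup>*)"

definition is_out_directed_tree :: "'b set \<Rightarrow> ('b \<times> 'b) set \<Rightarrow> bool" where
  "is_out_directed_tree V E \<longleftrightarrow> (\<exists>r. out_tree V E r)"

definition embeds_onto :: "'b set \<Rightarrow> ('b \<times> 'b) set \<Rightarrow> 'a set \<Rightarrow> ('a \<times> 'a) set \<Rightarrow> 'a set \<Rightarrow> bool" where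
  "embeds_onto W F V E U \<longleftrightarrow> U \<subseteq> V \<and>
     (\<exists>f. bij_betw f W U \<and> (\<forall>u v. (u, v) \<in> F \<longrightarrow> (f u, f v) \<in> E))"

definition is_subgraph_iso :: "'b set \<Rightarrow> ('b \<times> 'b) set \<Rightarrow> 'a set \<Rightarrow> ('a \<times> 'a) set \<Rightarrow> bool" where
  "is_subgraph_iso W F V E \<longleftrightarrow> (\<exists>U. embeds_onto W F V E U)"

definition subtree :: "'b set \<Rightarrow> ('b \<times> 'b) set \<Rightarrow> 'b set \<Rightarrow> ('b \<times> 'b) set \<Rightarrow> bool" where
  "subtree W F VT ET \<longleftrightarrow> W \<subseteq> VT \<and> F \<subseteq> ET \<and> F \<subseteq> W \<times> W \<and> ug_connected W F"

end

theory Submission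
  imports Defs "HOL-Library.Transitive_Closure_Table"
begin

text \<open>Keep a set X of vertices each having fewer than \<open>|T|\<close> out-neighbours
  in \<open>V - X\<close>, with \<open>2|X| \<le> |V|\<close>, together with an embedding f into \<open>V - X\<close> of an
  ancestor-closed subtree W of T containing the root. A vertex b of T whose parent a lies in W
  can be attached whenever f(a) has an out-neighbour outside \<open>X \<union> f(W)\<close>; otherwise all
  out-neighbours of f(a) in \<open>V - X\<close> lie in \<open>f(W) - {f(a)}\<close>, so f(a) can be moved into X
  and the embedding restarted. Since T does not embed, W never exhausts T, and the process
  stops when \<open>|W| = |V| - 2|X|\<close>; then \<open>Y = V - X - f(W)\<close> has exactly \<open>|X|\<close> elements.\<close>

lemma rtrancl_distinct_pathE:
  assumes "(x, y) \<in> R\<^sup>*"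
  obtains ps where "rtrancl_path (\<lambda>u v. (u, v) \<in> R) x ps y" "distinct (x # ps)"
proof -
  have "(\<lambda>u v. (u, v) \<in> R)\<^sup>*\<^sup>* x y" using assms by (simp add: rtranclp_rtrancl_eq)
  then obtain ps where "rtrancl_path (\<lambda>u v. (u, v) \<in> R) x ps y"
    by (auto simp: rtranclp_eq_rtrancl_path)
  then show ?thesis by (rule rtrancl_path_distinct) (rule that)
qed

lemma rtrancl_path_set_subset:
  assumes "rtrancl_path (\<lambda>u v. (u, v) \<in> R) x ps y" "R \<subseteq> S \<times> S" "x \<in> S"
  shows "set (x # ps) \<subseteq> S"
  using assms rtrancl_path_Range[OF assms(1)] by auto

lemma ug_has_cycleI:
  assumes path: "rtrancl_path (adj E) x ps y" and "distinct (x # ps)" "set (x # ps) \<subseteq> V"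
    and "2 \<le> length ps" and "adj E y x"
  shows "ug_has_cycle V E"
  unfolding ug_has_cycle_def
proof (intro exI[of _ "x # ps"] conjI allI impI)
  show "adj E (last (x # ps)) (hd (x # ps))"
    using assms rtrancl_path_last[OF path] by auto
  fix i assume "Suc i < length (x # ps)"
  then show "adj E ((x # ps) ! i) ((x # ps) ! Suc i)"
    using rtrancl_path_nth[OF path] by simp
qed (use assms in auto)

lemma oriented_tree_no_return_path:
  assumes ot: "oriented_tree VT ET" and xb: "(x, b) \<in> ET"
  shows "(b, x) \<notin> ET\<^sup>*"
proof
  assume "(b, x) \<in> ET\<^sup>*"
  then obtain ps where path: "rtrancl_path (\<lambda>u v. (u, v) \<in> ET) b ps x" and dist: "distinct (b # ps)"
    by (rule rtrancl_distinct_pathE)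
  have sub: "ET \<subseteq> VT \<times> VT" and "x \<noteq> b"
    using ot xb by (auto simp: oriented_tree_def digraph_def)
  then have "ps \<noteq> []" using path by (auto elim: rtrancl_path.cases)
  show False
  proof (cases "ps = [x]")
    case True
    then have "(b, x) \<in> ET" using path by (auto elim: rtrancl_path.cases)
    then show False using ot xb by (auto simp: oriented_tree_def)
  next
    case False
    with \<open>ps \<noteq> []\<close> have "2 \<le> length ps"
      using rtrancl_path_last[OF path] by (cases ps rule: rev_cases) (auto simp: Suc_le_eq)
    moreover have "rtrancl_path (adj ET) b ps x"
      using path by (rule rtrancl_path_mono) (simp add: adj_def)
    moreover have "set (b # ps) \<subseteq> VT"
      using rtrancl_path_set_subset[OF path sub] sub xb by auto
    ultimately have "ug_has_cycle VT ET"
      using dist xb by (intro ug_has_cycleI) (auto simp: adj_def)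
    then show False using ot by (simp add: oriented_tree_def)
  qed
qed

lemma out_tree_root_no_in_arc:
  assumes "out_tree VT ET r"
  shows "(u, r) \<notin> ET"
proof
  assume ur: "(u, r) \<in> ET"
  have ot: "oriented_tree VT ET" using assms by (simp add: out_tree_def)
  then have "u \<in> VT" using ur by (auto simp: oriented_tree_def digraph_def)
  then have "(r, u) \<in> ET\<^sup>*" using assms by (simp add: out_tree_def)
  then show False using oriented_tree_no_return_path[OF ot ur] by blast
qed

lemma rtrancl_avoiding:
  assumes "(r, a) \<in> R\<^sup>*" and "(b, a) \<notin> R\<^sup>*"
  shows "(r, a) \<in> (R \<inter> (- {b}) \<times> (- {b}))\<^sup>*"
  using assms
proof (induction rule: rtrancl_induct)
  case (step y z)
  then have "(b, y) \<notin> R\<^sup>*" by (meson rtrancl.rtrancl_into_rtrancl)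
  with step show ?case by (auto intro: rtrancl.rtrancl_into_rtrancl)
qed simp

text \<open>Two in-arcs \<open>a \<rightarrow> b\<close>, \<open>c \<rightarrow> b\<close> would close a cycle with the walk from a back to r and on
  to c, which avoids b because b reaches neither a nor c.\<close>

lemma out_tree_in_arc_unique:
  assumes otr: "out_tree VT ET r" and ab: "(a, b) \<in> ET" and cb: "(c, b) \<in> ET"
  shows "a = c"
proof (rule ccontr)
  assume "a \<noteq> c"
  have ot: "oriented_tree VT ET" using otr by (simp add: out_tree_def)
  have sub: "ET \<subseteq> VT \<times> VT" and "a \<noteq> b"
    using ot ab by (auto simp: oriented_tree_def digraph_def)
  define A where "A = {(x, y). adj ET x y} \<inter> (VT - {b}) \<times> (VT - {b})"
  have to_A: "(r, v) \<in> A\<^sup>*" if "(v, b) \<in> ET" for v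
  proof -
    have "(r, v) \<in> ET\<^sup>*" using otr that sub by (auto simp: out_tree_def)
    then have "(r, v) \<in> (ET \<inter> (- {b}) \<times> (- {b}))\<^sup>*"
      using oriented_tree_no_return_path[OF ot that] by (rule rtrancl_avoiding)
    moreover have "ET \<inter> (- {b}) \<times> (- {b}) \<subseteq> A" using sub by (auto simp: A_def adj_def)
    ultimately show ?thesis by (meson rtrancl_mono subsetD)
  qed
  have "sym A" by (auto simp: A_def sym_def adj_def)
  then have "(a, r) \<in> A\<^sup>*" using to_A[OF ab] by (metis rtrancl_converseI sym_conv_converse_eq)
  then have "(a, c) \<in> A\<^sup>*" using to_A[OF cb] by (rule rtrancl_trans)
  then obtain ps where path: "rtrancl_path (\<lambda>u v. (u, v) \<in> A) a ps c" and dist: "distinct (a # ps)"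
    by (rule rtrancl_distinct_pathE)
  have "A \<subseteq> (VT - {b}) \<times> (VT - {b})" by (auto simp: A_def)
  then have in_VT: "set (a # ps) \<subseteq> VT - {b}"
    using rtrancl_path_set_subset[OF path] ab sub \<open>a \<noteq> b\<close> by blast
  have "rtrancl_path (adj ET) a ps c"
    using path by (rule rtrancl_path_mono) (simp add: A_def)
  moreover have "rtrancl_path (adj ET) c [b] b"
    using cb by (auto simp: adj_def intro: rtrancl_path.intros)
  ultimately have "rtrancl_path (adj ET) a (ps @ [b]) b"
    by (rule rtrancl_path_trans)
  moreover have "ps \<noteq> []" using path \<open>a \<noteq> c\<close> by (auto elim: rtrancl_path.cases)
  ultimately have "ug_has_cycle VT ET"
    using dist in_VT ab sub by (intro ug_has_cycleI[of ET a "ps @ [b]"]) (auto simp: adj_def Suc_le_eq)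
  then show False using ot by (simp add: oriented_tree_def)
qed
lemma rtrancl_exit_arc:
  assumes "(r, v) \<in> R\<^sup>*" "r \<in> W" "v \<notin> W"
  shows "\<exists>a b. (a, b) \<in> R \<and> a \<in> W \<and> b \<notin> W"
  using assms by (induction rule: rtrancl_induct) auto

lemma ug_connected_insert:
  assumes "ug_connected W F" "a \<in> W" "F \<subseteq> F'" "(a, b) \<in> F'"
  shows "ug_connected (insert b W) F'"
proof -
  let ?R = "{(x, y). adj F x y} \<inter> W \<times> W"
  let ?R' = "{(x, y). adj F' x y} \<inter> insert b W \<times> insert b W"
  have "?R \<subseteq> ?R'" using assms(3) by (auto simp: adj_def)
  then have in_W: "(u, v) \<in> ?R'\<^sup>*" if "u \<in> W" "v \<in> W" for u v
    using assms(1) that rtrancl_mono unfolding ug_connected_def by blast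
  have "(a, b) \<in> ?R'" "(b, a) \<in> ?R'" using assms(2,4) by (auto simp: adj_def)
  then have "(u, b) \<in> ?R'\<^sup>*" "(b, u) \<in> ?R'\<^sup>*" if "u \<in> W" for u
    using in_W[OF that assms(2)] in_W[OF assms(2) that]
    by (auto intro: rtrancl_into_rtrancl converse_rtrancl_into_rtrancl)
  then show ?thesis using in_W unfolding ug_connected_def by auto
qed

definition has_tree_partition :: "'a set \<Rightarrow> ('a \<times> 'a) set \<Rightarrow> 'b set \<Rightarrow> ('b \<times> 'b) set \<Rightarrow> bool" where
  "has_tree_partition V E VT ET \<longleftrightarrow> (\<exists>U X Y. U \<union> X \<union> Y = V \<and> U \<inter> X = {} \<and> U \<inter> Y = {} \<and> X \<inter> Y = {}
     \<and> (\<exists>W F. subtree W F VT ET \<and> embeds_onto W F V E U)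
     \<and> card X = card Y
     \<and> (\<forall>x\<in>X. card {y\<in>Y. (x, y) \<in> E} < card VT))"

definition low_outdegree_set :: "'a set \<Rightarrow> ('a \<times> 'a) set \<Rightarrow> nat \<Rightarrow> 'a set \<Rightarrow> bool" where
  "low_outdegree_set V E k X \<longleftrightarrow>
     X \<subseteq> V \<and> 2 * card X \<le> card V \<and> (\<forall>x\<in>X. card {y \<in> V - X. (x, y) \<in> E} < k)"

definition root_embedding ::
    "'b set \<Rightarrow> ('b \<times> 'b) set \<Rightarrow> 'b \<Rightarrow> 'b set \<Rightarrow> ('a \<times> 'a) set \<Rightarrow> 'a set \<Rightarrow> ('b \<Rightarrow> 'a) \<Rightarrow> bool" where
  "root_embedding VT ET r W E Z f \<longleftrightarrow>
     W \<subseteq> VT \<and> (W \<noteq> {} \<longrightarrow> r \<in> W) \<and> (\<forall>u v. (u, v) \<in> ET \<longrightarrow> v \<in> W \<longrightarrow> u \<in> W)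
     \<and> ug_connected W (ET \<inter> W \<times> W) \<and> inj_on f W \<and> f ` W \<subseteq> Z
     \<and> (\<forall>u v. (u, v) \<in> ET \<longrightarrow> u \<in> W \<longrightarrow> v \<in> W \<longrightarrow> (f u, f v) \<in> E)"

lemma root_embedding_empty: "root_embedding VT ET r {} E Z f"
  by (simp add: root_embedding_def ug_connected_def)

lemma root_embedding_root:
  assumes otr: "out_tree VT ET r" and "z \<in> Z"
  shows "root_embedding VT ET r {r} E Z (\<lambda>_. z)"
  using assms out_tree_root_no_in_arc[OF otr]
  by (auto simp: root_embedding_def out_tree_def ug_connected_def)

lemma root_embedding_insert:
  assumes otr: "out_tree VT ET r" and emb: "root_embedding VT ET r W E Z f"
    and ab: "(a, b) \<in> ET" "a \<in> W" "b \<notin> W" and w: "w \<in> Z - f ` W" "(f a, w) \<in> E"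
  shows "root_embedding VT ET r (insert b W) E Z (f(b := w))"
  unfolding root_embedding_def
proof (intro conjI allI impI)
  have "W \<subseteq> VT" "f ` W \<subseteq> Z" "inj_on f W" and closed: "\<And>u v. (u, v) \<in> ET \<Longrightarrow> v \<in> W \<Longrightarrow> u \<in> W"
    and arcs: "\<And>u v. (u, v) \<in> ET \<Longrightarrow> u \<in> W \<Longrightarrow> v \<in> W \<Longrightarrow> (f u, f v) \<in> E"
    using emb by (auto simp: root_embedding_def)
  have parent: "u = a" if "(u, b) \<in> ET" for u
    using out_tree_in_arc_unique[OF otr that ab(1)] .
  show "insert b W \<subseteq> VT"
    using \<open>W \<subseteq> VT\<close> otr ab(1) by (auto simp: out_tree_def oriented_tree_def digraph_def)
  show "r \<in> insert b W" using emb ab(2) by (auto simp: root_embedding_def)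
  show "ug_connected (insert b W) (ET \<inter> insert b W \<times> insert b W)"
    using emb ab by (intro ug_connected_insert[of W "ET \<inter> W \<times> W" a]) (auto simp: root_embedding_def)
  show "inj_on (f(b := w)) (insert b W)" using \<open>inj_on f W\<close> w ab(3) by (auto simp: inj_on_def)
  show "(f(b := w)) ` insert b W \<subseteq> Z" using \<open>f ` W \<subseteq> Z\<close> w ab(3) by auto
  fix u v assume uv: "(u, v) \<in> ET"
  show "u \<in> insert b W" if "v \<in> insert b W"
    using that closed[OF uv] parent[of u] uv ab(2) by auto
  show "((f(b := w)) u, (f(b := w)) v) \<in> E" if "u \<in> insert b W" "v \<in> insert b W"
  proof (cases "v = b")
    case True
    then show ?thesis using parent uv ab w by auto
  next
    case False
    then have "v \<in> W" "u \<in> W" using that closed[OF uv] by auto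
    then show ?thesis using arcs[OF uv] ab(3) by auto
  qed
qed

lemma root_embedding_total:
  assumes "root_embedding VT ET r VT E Z f" "Z \<subseteq> V" "ET \<subseteq> VT \<times> VT"
  shows "is_subgraph_iso VT ET V E"
  using assms unfolding is_subgraph_iso_def embeds_onto_def root_embedding_def
  by (auto intro!: exI[of _ "f ` VT"] exI[of _ f] simp: inj_on_imp_bij_betw bij_betw_def)

lemma has_tree_partitionI:
  assumes fin: "finite V" and low: "low_outdegree_set V E (card VT) X"
    and emb: "root_embedding VT ET r W E (V - X) f" and size: "card W = card V - 2 * card X"
  shows "has_tree_partition V E VT ET"
proof -
  have XV: "X \<subseteq> V" and "2 * card X \<le> card V" using low by (auto simp: low_outdegree_set_def)
  have inj: "inj_on f W" and UV: "f ` W \<subseteq> V - X" using emb by (auto simp: root_embedding_def)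
  define U where "U = f ` W"
  define Y where "Y = V - X - U"
  have "card Y = card (V - X) - card U"
    using UV fin by (simp add: Y_def U_def card_Diff_subset finite_subset)
  also have "\<dots> = card X"
    using XV fin size inj \<open>2 * card X \<le> card V\<close> by (simp add: U_def card_Diff_subset finite_subset card_image)
  finally have "card X = card Y" ..
  moreover have "card {y \<in> Y. (x, y) \<in> E} < card VT" if "x \<in> X" for x
  proof -
    have "card {y \<in> Y. (x, y) \<in> E} \<le> card {y \<in> V - X. (x, y) \<in> E}"
      using fin by (intro card_mono) (auto simp: Y_def)
    also have "\<dots> < card VT" using low that by (auto simp: low_outdegree_set_def)
    finally show ?thesis .
  qed
  moreover have "subtree W (ET \<inter> W \<times> W) VT ET \<and> embeds_onto W (ET \<inter> W \<times> W) V E U"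
    using emb UV
    by (auto intro!: exI[of _ f] simp: root_embedding_def subtree_def embeds_onto_def U_def
        inj_on_imp_bij_betw bij_betw_def)
  ultimately show ?thesis
    unfolding has_tree_partition_def using UV XV
    by (intro exI[of _ U] exI[of _ X] exI[of _ Y]) (auto simp: U_def Y_def)
qed

lemma low_outdegree_set_insert:
  assumes fin: "finite V" and low: "low_outdegree_set V E k X"
    and emb: "root_embedding VT ET r W E (V - X) f" and "a \<in> W"
    and no_exit: "\<forall>w \<in> V - X - f ` W. (f a, w) \<notin> E"
    and "card W \<le> k" and "card W < card V - 2 * card X"
  shows "low_outdegree_set V E k (insert (f a) X)"
proof -
  have XV: "X \<subseteq> V" and Xlow: "\<forall>x\<in>X. card {y \<in> V - X. (x, y) \<in> E} < k"
    using low by (auto simp: low_outdegree_set_def)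
  have inj: "inj_on f W" and fW: "f ` W \<subseteq> V - X" using emb by (auto simp: root_embedding_def)
  have finW: "finite W" using fin fW inj finite_imageD finite_subset by blast
  have fa: "f a \<in> V - X" using fW \<open>a \<in> W\<close> by blast
  have "0 < card W" using finW \<open>a \<in> W\<close> by (auto simp: card_gt_0_iff)
  let ?X = "insert (f a) X"
  have "card {y \<in> V - ?X. (f a, y) \<in> E} \<le> card (f ` W - {f a})"
    using no_exit finW by (intro card_mono) auto
  also have "\<dots> < card W"
    using finW \<open>a \<in> W\<close> inj \<open>0 < card W\<close> by (simp add: card_image)
  finally have "card {y \<in> V - ?X. (f a, y) \<in> E} < k" using \<open>card W \<le> k\<close> by simp
  moreover have "card {y \<in> V - ?X. (x, y) \<in> E} < k" if "x \<in> X" for x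
  proof -
    have "card {y \<in> V - ?X. (x, y) \<in> E} \<le> card {y \<in> V - X. (x, y) \<in> E}"
      using fin by (intro card_mono) auto
    then show ?thesis using Xlow that by fastforce
  qed
  moreover have "2 * card ?X \<le> card V"
    using fa XV fin \<open>0 < card W\<close> \<open>card W < card V - 2 * card X\<close> by (simp add: finite_subset)
  ultimately show ?thesis using fa XV by (auto simp: low_outdegree_set_def)
qed

lemma root_embedding_extend_or_low_outdegree_insert:
  assumes fin: "finite V" and otr: "out_tree VT ET r" and low: "low_outdegree_set V E (card VT) X"
    and emb: "root_embedding VT ET r W E (V - X) f" and "W \<noteq> {}" "W \<noteq> VT"
    and gap: "card W < card V - 2 * card X"
  shows "(\<exists>W' f'. root_embedding VT ET r W' E (V - X) f' \<and> card W' = Suc (card W))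
    \<or> (\<exists>x \<in> V - X. low_outdegree_set V E (card VT) (insert x X))"
proof -
  have "W \<subseteq> VT" "r \<in> W" using emb \<open>W \<noteq> {}\<close> by (auto simp: root_embedding_def)
  then obtain v where "v \<in> VT" "v \<notin> W" "(r, v) \<in> ET\<^sup>*"
    using \<open>W \<noteq> VT\<close> otr by (auto simp: out_tree_def)
  then obtain a b where ab: "(a, b) \<in> ET" "a \<in> W" "b \<notin> W"
    using rtrancl_exit_arc \<open>r \<in> W\<close> by metis
  have finW: "finite W"
    using otr \<open>W \<subseteq> VT\<close> by (auto simp: out_tree_def oriented_tree_def digraph_def finite_subset)
  show ?thesis
  proof (cases "\<exists>w \<in> V - X - f ` W. (f a, w) \<in> E")
    case True
    then obtain w where "w \<in> V - X - f ` W" "(f a, w) \<in> E" by blast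
    then have "root_embedding VT ET r (insert b W) E (V - X) (f(b := w))"
      by (intro root_embedding_insert[OF otr emb ab])
    then show ?thesis using ab(3) finW by auto
  next
    case False
    have "card W \<le> card VT"
      using otr \<open>W \<subseteq> VT\<close> by (auto simp: out_tree_def oriented_tree_def digraph_def card_mono)
    then have "low_outdegree_set V E (card VT) (insert (f a) X)"
      using False gap by (intro low_outdegree_set_insert[OF fin low emb ab(2)]) auto
    moreover have "f a \<in> V - X" using emb ab(2) by (auto simp: root_embedding_def)
    ultimately show ?thesis by blast
  qed
qed

lemma has_tree_partition_or_low_outdegree_insert:
  assumes fin: "finite V" and otr: "out_tree VT ET r" and noiso: "\<not> is_subgraph_iso VT ET V E"
    and low: "low_outdegree_set V E (card VT) X"
  shows "root_embedding VT ET r W E (V - X) f \<Longrightarrow> card W \<le> card V - 2 * card X \<Longrightarrow>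
    has_tree_partition V E VT ET \<or> (\<exists>x \<in> V - X. low_outdegree_set V E (card VT) (insert x X))"
proof (induction "card V - 2 * card X - card W" arbitrary: W f rule: less_induct)
  case less
  consider "card W = card V - 2 * card X" | "W = {}" "card W < card V - 2 * card X"
    | "W \<noteq> {}" "card W < card V - 2 * card X" using less.prems(2) by force
  then show ?case
  proof cases
    case 1
    then show ?thesis using has_tree_partitionI[OF fin low less.prems(1)] by blast
  next
    case 2
    have "card (V - X) > 0"
      using 2 low fin by (auto simp: low_outdegree_set_def card_Diff_subset finite_subset)
    then obtain z where "z \<in> V - X" by (metis card_gt_0_iff ex_in_conv)
    with otr have "root_embedding VT ET r {r} E (V - X) (\<lambda>_. z)" by (rule root_embedding_root)
    moreover have "card V - 2 * card X - card {r} < card V - 2 * card X - card W"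
      and "card {r} \<le> card V - 2 * card X" using 2 by simp_all
    ultimately show ?thesis using less.hyps by blast
  next
    case 3
    have "ET \<subseteq> VT \<times> VT" using otr by (auto simp: out_tree_def oriented_tree_def digraph_def)
    then have "W \<noteq> VT"
      using noiso root_embedding_total[of VT ET r E "V - X" f V] less.prems(1) by blast
    then consider W' f' where "root_embedding VT ET r W' E (V - X) f'" "card W' = Suc (card W)"
      | "\<exists>x \<in> V - X. low_outdegree_set V E (card VT) (insert x X)"
      using root_embedding_extend_or_low_outdegree_insert[OF fin otr low less.prems(1) 3(1) \<open>W \<noteq> VT\<close> 3(2)] by blast
    then show ?thesis
    proof cases
      case 1
      moreover have "card V - 2 * card X - card W' < card V - 2 * card X - card W"
        and "card W' \<le> card V - 2 * card X" using 1(2) 3(2) by simp_all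
      ultimately show ?thesis using less.hyps by blast
    qed simp
  qed
qed

lemma has_tree_partition_if_low_outdegree_set:
  assumes fin: "finite V" and otr: "out_tree VT ET r" and noiso: "\<not> is_subgraph_iso VT ET V E"
  shows "low_outdegree_set V E (card VT) X \<Longrightarrow> has_tree_partition V E VT ET"
proof (induction "card (V - X)" arbitrary: X rule: less_induct)
  case less
  have "has_tree_partition V E VT ET \<or> (\<exists>x \<in> V - X. low_outdegree_set V E (card VT) (insert x X))"
    using has_tree_partition_or_low_outdegree_insert[OF fin otr noiso less.prems root_embedding_empty]
    by simp
  moreover have "has_tree_partition V E VT ET" if "x \<in> V - X" "low_outdegree_set V E (card VT) (insert x X)" for x
  proof (rule less.hyps[OF _ that(2)])
    show "card (V - insert x X) < card (V - X)"
      using fin that(1) by (intro psubset_card_mono) auto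
  qed
  ultimately show ?case by blast
qed

theorem mainTheorem11:
  fixes V :: "'a set" and E :: "('a \<times> 'a) set"
    and VT :: "'b set" and ET :: "('b \<times> 'b) set"
  assumes "digraph V E"
    and "is_out_directed_tree VT ET"
    and "\<not> is_subgraph_iso VT ET V E"
  shows "\<exists>U X Y. U \<union> X \<union> Y = V \<and> U \<inter> X = {} \<and> U \<inter> Y = {} \<and> X \<inter> Y = {}
           \<and> (\<exists>W F. subtree W F VT ET \<and> embeds_onto W F V E U)
           \<and> card X = card Y
           \<and> (\<forall>x\<in>X. card {y\<in>Y. (x, y) \<in> E} < card VT)"
proof -
  obtain r where "out_tree VT ET r" using assms(2) by (auto simp: is_out_directed_tree_def)
  moreover have "finite V" using assms(1) by (simp add: digraph_def)
  moreover have "low_outdegree_set V E (card VT) {}" by (simp add: low_outdegree_set_def)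
  ultimately have "has_tree_partition V E VT ET"
    by (intro has_tree_partition_if_low_outdegree_set[OF _ _ assms(3)])
  then show ?thesis by (simp add: has_tree_partition_def)
qed

end
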